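(* For every fixed $C\in\mathbb C$ there exists a unique formal series $\rho\in\mathbb C[[\zeta^{-1}]]$ satisfying $$2\zeta^3\rho'''+3\zeta^2\rho''-2\zeta(\zeta-2C)\rho'-2C\rho=0,\qquad\rho(\infty)=1,$$ where $'=d/d\zeta$ and $\rho(\infty)$ is the constant term. Moreover $\rho\in\mathbb Q[C][[\zeta^{-1}]]$ and $\rho$ satisfies $$\zeta\rho'^2+\Bigl(1-\frac{2C}\zeta\Bigr)\rho^2-\rho\rho'-2\zeta\rho\rho''=1.$$ *)

theory Defs
  imports Complex_Main "HOL-Computational_Algebra.Formal_Laurent_Series"
    "HOL-Computational_Algebra.Polynomial"
begin

text \<open>Formal series in \<zeta>^{-1}: we use formal Laurent series in the variable
  w = \<zeta>^{-1} (so fls_X plays the role of 1/\<zeta> and fls_X_inv the role of \<zeta>).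
  An element of C[[\<zeta>^{-1}]] is an fps in w, embedded via fps_to_fls.\<close>

abbreviation zeta :: "complex fls" where
  "zeta \<equiv> fls_X_inv"

text \<open>Derivative d/d\<zeta>: on  \<Sum> c_n \<zeta>^{-n}  it gives  \<Sum> -n c_n \<zeta>^{-n-1}.
  In terms of w = 1/\<zeta> this is  -w^2 d/dw  (chain rule).\<close>
definition zderiv :: "complex fls \<Rightarrow> complex fls" where
  "zderiv f = - (fls_X\<^sup>2 * fls_deriv f)"


definition rho_ode :: "complex \<Rightarrow> complex fps \<Rightarrow> bool" where
  "rho_ode C \<rho> \<longleftrightarrow>
     (let R = fps_to_fls \<rho>; c = fls_const C in
       2 * zeta^3 * zderiv (zderiv (zderiv R)) + 3 * zeta^2 * zderiv (zderiv R)
       - 2 * zeta * (zeta - 2 * c) * zderiv R - 2 * c * R = 0)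
     \<and> fps_nth \<rho> 0 = 1"

end

theory Submission
  imports Defs
begin

text \<open>In the variable \<open>w = 1/\<zeta>\<close> the equation becomes one between ordinary power series,
  and comparing coefficients gives the two-term recurrence
  \<open>2(n+1) \<rho>(n+1) = (2n+1)(n(n+1)+2C) \<rho>(n)\<close>. With \<open>\<rho>(0) = 1\<close> this determines \<open>\<rho>\<close>
  uniquely, and shows that each coefficient is a polynomial in \<open>C\<close> over \<open>\<rat>\<close>.
  The quadratic expression of the last claim, written in \<open>w\<close>, has \<open>w\<close>-derivative \<open>\<rho>\<close> times
  the differential operator, so along a solution it is constant, equal to its constant
  term \<open>\<rho>(0)\<^sup>2 = 1\<close>.\<close>

lemma zderiv_fps_to_fls: "zderiv (fps_to_fls f) = fps_to_fls (- (fps_X\<^sup>2 * fps_deriv f))"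
  by (simp add: zderiv_def fls_deriv_fps_to_fls fls_times_fps_to_fls fps_to_fls_power)

lemma zderiv2_fps_to_fls:
  "zderiv (zderiv (fps_to_fls f)) =
     fps_to_fls (2 * fps_X^3 * fps_deriv f + fps_X^4 * fps_deriv (fps_deriv f))"
  by (simp only: zderiv_fps_to_fls fps_to_fls_eq_iff)
     (simp add: fps_deriv_power algebra_simps numeral_eq_Suc)

lemma zderiv3_fps_to_fls:
  "zderiv (zderiv (zderiv (fps_to_fls f))) =
     fps_to_fls (- (6 * fps_X^4 * fps_deriv f + 6 * fps_X^5 * fps_deriv (fps_deriv f)
                    + fps_X^6 * fps_deriv (fps_deriv (fps_deriv f))))"
  by (simp only: zderiv2_fps_to_fls zderiv_fps_to_fls fps_to_fls_eq_iff)
     (simp add: fps_deriv_power algebra_simps numeral_eq_Suc)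

lemma fls_X_times_zeta: "fls_X * zeta = 1"
  by (simp add: fls_X_times_conv_shift(1))

definition rho_operator :: "complex \<Rightarrow> complex fps \<Rightarrow> complex fps" where
  "rho_operator C f =
     - 2 * fps_X^3 * fps_deriv (fps_deriv (fps_deriv f)) - 9 * fps_X^2 * fps_deriv (fps_deriv f)
     - 6 * fps_X * fps_deriv f + 2 * fps_deriv f - 4 * fps_const C * fps_X * fps_deriv f
     - 2 * fps_const C * f"

lemmas fps_to_fls_ring_simps = fps_to_fls_plus fps_to_fls_minus fps_to_fls_uminus fls_times_fps_to_fls
  fps_to_fls_power fps_X_to_fls fps_const_to_fls fps_to_fls_numeral fps_one_to_fls

lemma rho_ode_lhs_eq_fps_to_fls:
  "2 * zeta^3 * zderiv (zderiv (zderiv (fps_to_fls f))) + 3 * zeta^2 * zderiv (zderiv (fps_to_fls f))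
   - 2 * zeta * (zeta - 2 * fls_const C) * zderiv (fps_to_fls f) - 2 * fls_const C * fps_to_fls f
   = fps_to_fls (rho_operator C f)"
  using fls_X_times_zeta
  unfolding rho_operator_def zderiv3_fps_to_fls
  unfolding zderiv2_fps_to_fls unfolding zderiv_fps_to_fls
  by (simp only: fps_to_fls_ring_simps) algebra

definition rho_first_integral :: "complex \<Rightarrow> complex fps \<Rightarrow> complex fps" where
  "rho_first_integral C f =
     fps_X^3 * (fps_deriv f)^2 + (1 - 2 * fps_const C * fps_X) * f^2
     - 3 * fps_X^2 * f * fps_deriv f - 2 * fps_X^3 * f * fps_deriv (fps_deriv f)"

lemma divide_zeta: "c / zeta = c * fls_X"
  by (simp add: divide_inverse fls_inverse_X_inv)

lemma rho_first_integral_lhs_eq_fps_to_fls: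
  "zeta * (zderiv (fps_to_fls f))^2 + (1 - 2 * fls_const C / zeta) * (fps_to_fls f)^2
   - fps_to_fls f * zderiv (fps_to_fls f) - 2 * zeta * fps_to_fls f * zderiv (zderiv (fps_to_fls f))
   = fps_to_fls (rho_first_integral C f)"
  using fls_X_times_zeta
  unfolding rho_first_integral_def divide_zeta zderiv2_fps_to_fls
  unfolding zderiv_fps_to_fls
  by (simp only: fps_to_fls_ring_simps) algebra

lemma fps_numeral_mult_nth: "(numeral k * f) $ n = (numeral k :: 'a::comm_semiring_1) * f $ n"
  by (metis fps_numeral_fps_const fps_mult_left_const_nth)

lemma rho_operator_nth:
  "rho_operator C f $ n =
     2 * of_nat (n + 1) * f $ (n + 1) - of_nat (2 * n + 1) * (of_nat (n * (n + 1)) + 2 * C) * f $ n"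
proof (cases "n < 3")
  case True
  then have "n = 0 \<or> n = 1 \<or> n = 2" by linarith
  then show ?thesis
    unfolding rho_operator_def
    by (elim disjE; simp add: fps_X_power_mult_nth mult.assoc fps_numeral_mult_nth del: power_Suc;
        simp add: algebra_simps numeral_2_eq_2 fps_numeral_nth)
next
  case False
  then obtain m where "n = m + 3"
    by (metis add.commute le_Suc_ex not_less)
  then show ?thesis
    by (simp add: rho_operator_def fps_X_power_mult_nth mult.assoc fps_numeral_mult_nth del: power_Suc)
       (simp add: algebra_simps numeral_3_eq_3)
qed

lemma rho_ode_iff_operator: "rho_ode C f \<longleftrightarrow> rho_operator C f = 0 \<and> f $ 0 = 1"
  by (simp only: rho_ode_def Let_def rho_ode_lhs_eq_fps_to_fls fps_to_fls_eq_0_iff)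

fun rho_coeff :: "complex \<Rightarrow> nat \<Rightarrow> complex" where
  "rho_coeff C 0 = 1"
| "rho_coeff C (Suc n) =
     of_nat (2 * n + 1) * (of_nat (n * (n + 1)) + 2 * C) / of_nat (2 * (n + 1)) * rho_coeff C n"

lemma rho_operator_eq_0_iff:
  "rho_operator C f = 0 \<longleftrightarrow>
     (\<forall>n. f $ Suc n = of_nat (2 * n + 1) * (of_nat (n * (n + 1)) + 2 * C) / of_nat (2 * (n + 1)) * f $ n)"
proof -
  have "rho_operator C f $ n = 0 \<longleftrightarrow>
      f $ Suc n = of_nat (2 * n + 1) * (of_nat (n * (n + 1)) + 2 * C) / of_nat (2 * (n + 1)) * f $ n"
    for n
  proof -
    have "(of_nat (2 * (n + 1)) :: complex) \<noteq> 0"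
      by (simp only: of_nat_eq_0_iff) simp
    then show ?thesis
      unfolding rho_operator_nth by (auto simp: field_simps)
  qed
  then show ?thesis
    by (simp add: fps_eq_iff)
qed

lemma rho_ode_iff_eq_rho_coeff: "rho_ode C f \<longleftrightarrow> f = Abs_fps (rho_coeff C)"
proof
  assume "rho_ode C f"
  then have "f $ n = rho_coeff C n" for n
    by (induction n) (simp_all add: rho_ode_iff_operator rho_operator_eq_0_iff)
  then show "f = Abs_fps (rho_coeff C)"
    by (simp add: fps_eq_iff)
qed (simp add: rho_ode_iff_operator rho_operator_eq_0_iff)

lemma map_poly_of_rat_add:
  "map_poly (of_rat :: rat \<Rightarrow> 'a::field_char_0) (p + q) = map_poly of_rat p + map_poly of_rat q"
  by (intro poly_eqI) (simp add: coeff_map_poly of_rat_add)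

fun rho_poly :: "nat \<Rightarrow> rat poly" where
  "rho_poly 0 = 1"
| "rho_poly (Suc n) =
     smult (of_nat (2 * n + 1) / of_nat (2 * (n + 1))) ([:of_nat (n * (n + 1)), 2:] * rho_poly n)"

lemma poly_rho_poly: "poly (map_poly of_rat (rho_poly n)) C = rho_coeff C n"
  by (induction n) (simp_all add: map_poly_of_rat_add map_poly_smult map_poly_pCons of_rat_mult
      of_rat_divide of_rat_add field_simps)

lemma fps_deriv_rho_first_integral: "fps_deriv (rho_first_integral C f) = f * rho_operator C f"
  by (simp add: rho_first_integral_def rho_operator_def fps_deriv_power algebra_simps numeral_eq_Suc)

lemma rho_first_integral_nth_0: "rho_first_integral C f $ 0 = (f $ 0)\<^sup>2"
  by (simp add: rho_first_integral_def fps_X_power_mult_nth mult.assoc fps_numeral_mult_nth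
      power2_eq_square del: power_Suc)

lemma rho_first_integral_eq_1:
  assumes "rho_ode C f"
  shows "rho_first_integral C f = 1"
proof -
  from assms have "fps_deriv (rho_first_integral C f) = 0"
    by (simp add: fps_deriv_rho_first_integral rho_ode_iff_operator)
  then have "rho_first_integral C f = fps_const (rho_first_integral C f $ 0)"
    by (simp add: fps_deriv_eq_0_iff)
  with assms show ?thesis
    by (simp add: rho_first_integral_nth_0 rho_ode_iff_operator)
qed

theorem proposition4p1:
  shows "(\<forall>C::complex. \<exists>!\<rho>::complex fps. rho_ode C \<rho>)
    \<and> (\<exists>p :: nat \<Rightarrow> rat poly. \<forall>C \<rho>. rho_ode C \<rho> \<longrightarrow>
          (\<forall>n. fps_nth \<rho> n = poly (map_poly of_rat (p n)) C))
    \<and> (\<forall>C \<rho>. rho_ode C \<rho> \<longrightarrow>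
          (let R = fps_to_fls \<rho>; c = fls_const C in
             zeta * (zderiv R)^2 + (1 - 2 * c / zeta) * R^2 - R * zderiv R
             - 2 * zeta * R * zderiv (zderiv R) = 1))"
proof (intro conjI allI impI)
  show "\<exists>!\<rho>. rho_ode C \<rho>" for C
    by (simp add: rho_ode_iff_eq_rho_coeff)
  show "\<exists>p. \<forall>C \<rho>. rho_ode C \<rho> \<longrightarrow> (\<forall>n. \<rho> $ n = poly (map_poly of_rat (p n)) C)"
    by (intro exI[of _ rho_poly]) (simp add: rho_ode_iff_eq_rho_coeff poly_rho_poly)
  fix C \<rho>
  assume "rho_ode C \<rho>"
  then show "let R = fps_to_fls \<rho>; c = fls_const C in
      zeta * (zderiv R)^2 + (1 - 2 * c / zeta) * R^2 - R * zderiv R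
      - 2 * zeta * R * zderiv (zderiv R) = 1"
    by (simp only: Let_def rho_first_integral_lhs_eq_fps_to_fls rho_first_integral_eq_1 fps_one_to_fls)
qed

end
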